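(* The generic offset polynomial $g(d,\bar x)$ is primitive with respect to $\bar x=(x_1,x_2,x_3)$, i.e. it has no non-constant factor in $\mathbb C[d]$.
   Context: Let $f\in\mathbb C[y_1,y_2,y_3]$ be irreducible, defining a surface $\Sigma$; $f_i=\partial f/\partial y_i$, $h_{\rm imp}=\sum f_i^2$, not identically zero on $\Sigma$. The generic offset $\mathcal O_d(\Sigma)\subset\mathbb C^4$ is the Zariski closure of the projection to $(d,\bar x)$ of the solution set in $(d,\bar x,\bar y,u)$ of: $f(\bar y)=0$; $f_i(\bar y)(x_j-y_j)-f_j(\bar y)(x_i-y_i)=0$ ($i<j$); $\sum_i(x_i-y_i)^2-d^2=0$; $u\,h_{\rm imp}(\bar y)-1=0$. It is a hypersurface, and its square-free defining polynomial $g(d,\bar x)\in\mathbb C[d,\bar x]$ is the generic offset polynomial. *)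

theory Defs
  imports "HOL-Computational_Algebra.Computational_Algebra"
begin

text \<open>Multivariate polynomials are encoded as nested univariate polynomials.
  C[y1,y2,y3] = complex poly poly poly, innermost variable y1, outermost y3.
  C[d,x1,x2,x3] = complex poly poly poly poly, innermost d, then x1, x2, outermost x3.\<close>

definition eval3 :: "complex poly poly poly \<Rightarrow> complex \<Rightarrow> complex \<Rightarrow> complex \<Rightarrow> complex" where
  "eval3 f y1 y2 y3 = poly (poly (poly f [:[:y3:]:]) [:y2:]) y1"

definition eval4 :: "complex poly poly poly poly \<Rightarrow> complex \<Rightarrow> complex \<Rightarrow> complex \<Rightarrow> complex \<Rightarrow> complex" where
  "eval4 g d x1 x2 x3 = poly (poly (poly (poly g [:[:[:x3:]:]:]) [:[:x2:]:]) [:x1:]) d"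

definition pd1 :: "complex poly poly poly \<Rightarrow> complex poly poly poly" where
  "pd1 f = map_poly (map_poly pderiv) f"
definition pd2 :: "complex poly poly poly \<Rightarrow> complex poly poly poly" where
  "pd2 f = map_poly pderiv f"
definition pd3 :: "complex poly poly poly \<Rightarrow> complex poly poly poly" where
  "pd3 f = pderiv f"

definition h_imp :: "complex poly poly poly \<Rightarrow> complex poly poly poly" where
  "h_imp f = (pd1 f)^2 + (pd2 f)^2 + (pd3 f)^2"

definition offset_incidence_proj :: "complex poly poly poly \<Rightarrow> (complex \<times> complex \<times> complex \<times> complex) set" where
  "offset_incidence_proj f = {(d, x1, x2, x3). \<exists>y1 y2 y3 u.
      let f1 = eval3 (pd1 f) y1 y2 y3; f2 = eval3 (pd2 f) y1 y2 y3; f3 = eval3 (pd3 f) y1 y2 y3 in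
      eval3 f y1 y2 y3 = 0 \<and>
      f1 * (x2 - y2) - f2 * (x1 - y1) = 0 \<and>
      f1 * (x3 - y3) - f3 * (x1 - y1) = 0 \<and>
      f2 * (x3 - y3) - f3 * (x2 - y2) = 0 \<and>
      (x1 - y1)^2 + (x2 - y2)^2 + (x3 - y3)^2 - d^2 = 0 \<and>
      u * eval3 (h_imp f) y1 y2 y3 - 1 = 0}"

definition zariski_closure4 :: "(complex \<times> complex \<times> complex \<times> complex) set \<Rightarrow> (complex \<times> complex \<times> complex \<times> complex) set" where
  "zariski_closure4 S = {(d, x1, x2, x3). \<forall>p :: complex poly poly poly poly.
      (\<forall>(e, z1, z2, z3) \<in> S. eval4 p e z1 z2 z3 = 0) \<longrightarrow> eval4 p d x1 x2 x3 = 0}"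

definition generic_offset :: "complex poly poly poly \<Rightarrow> (complex \<times> complex \<times> complex \<times> complex) set" where
  "generic_offset f = zariski_closure4 (offset_incidence_proj f)"

definition const_in_x :: "complex poly \<Rightarrow> complex poly poly poly poly" where
  "const_in_x p = [:[:[:p:]:]:]"

end

theory Submission
  imports Defs
begin

(* Suppose a non-constant p in C[d] divides g.  Then p has a root d0, so the
   linear form L = d - d0 divides g; write g = L * q.  We show that L also divides q, so
   that L^2 divides the square-free g, which is absurd.

   (1) Since g = 0 on the incidence projection S, the cofactor q vanishes on every point
       of S with d <> d0.  Each point (d, x) of S lies on a "normal line"
       tau |-> (tau c, y + tau grad f(y)) contained in S (y a regular surface point,
       c^2 = |grad f(y)|^2 <> 0); along it d = tau c differs from d0 except at one
       parameter, so by continuity q vanishes on all of S.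
   (2) Hence q vanishes on the Zariski closure of S, i.e. on the zero set of g, which
       contains the whole hyperplane d = d0.
   (3) A polynomial vanishing on the hyperplane d = d0 is divisible by d - d0; this is
       proved one variable at a time via constant-coefficient divisibility. *)

lemma poly_hom_eval:
  fixes E :: "'a::comm_ring_1 \<Rightarrow> 'b::comm_ring_1"
  assumes add: "\<And>a b. E (a + b) = E a + E b" and mult: "\<And>a b. E (a * b) = E a * E b"
    and zero: "E 0 = 0"
  shows "E (poly p k) = poly (map_poly E p) (E k)"
proof (induction p)
  case 0
  then show ?case by (simp add: zero)
next
  case (pCons a p)
  then show ?case by (simp add: add mult map_poly_pCons zero)
qed

lemma eval2_outer:
  "poly (poly (b::complex poly poly) [:x1:]) d = poly (map_poly (\<lambda>c. poly c d) b) x1"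
  using poly_hom_eval[of "\<lambda>c. poly c d" b "[:x1:]"] by (simp add: poly_mult)

lemma eval3_outer:
  "poly (poly (poly (a::complex poly poly poly) [:[:x2:]:]) [:x1:]) d
     = poly (map_poly (\<lambda>b. poly (poly b [:x1:]) d) a) x2"
  using poly_hom_eval[of "\<lambda>b. poly (poly b [:x1:]) d" a "[:[:x2:]:]"] by (simp add: poly_mult)

lemma eval4_outer:
  "eval4 g d x1 x2 x3 = poly (map_poly (\<lambda>a. poly (poly (poly a [:[:x2:]:]) [:x1:]) d) g) x3"
  unfolding eval4_def
  using poly_hom_eval[of "\<lambda>a. poly (poly (poly a [:[:x2:]:]) [:x1:]) d" g "[:[:[:x3:]:]:]"]
  by (simp add: poly_mult)

lemma eval4_mult: "eval4 (a * b) d x1 x2 x3 = eval4 a d x1 x2 x3 * eval4 b d x1 x2 x3"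
  by (simp add: eval4_def poly_mult)

lemma eval4_linear_d: "eval4 (const_in_x [:-d0, 1:]) d x1 x2 x3 = d - d0"
  by (simp add: eval4_def const_in_x_def)

lemma eval3_h_imp:
  "eval3 (h_imp f) y1 y2 y3 =
     (eval3 (pd1 f) y1 y2 y3)^2 + (eval3 (pd2 f) y1 y2 y3)^2 + (eval3 (pd3 f) y1 y2 y3)^2"
  by (simp add: eval3_def h_imp_def power2_eq_square poly_mult)

section \<open>Polynomials vanishing on a hyperplane \<open>d = d0\<close>\<close>

lemma const_dvd_if_outer_vanishing:
  fixes p :: "'a::{comm_semiring_1,semiring_no_zero_divisors} poly"
    and E :: "'b \<Rightarrow> 'a \<Rightarrow> complex"
  assumes coeff_dvd: "\<And>a. (\<And>b. E b a = 0) \<Longrightarrow> c dvd a"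
    and zero: "\<And>b. E b 0 = 0"
    and vanish: "\<And>b x. poly (map_poly (E b) p) x = 0"
  shows "[:c:] dvd p"
proof -
  have "map_poly (E b) p = 0" for b
    using vanish poly_all_0_iff_0 by blast
  then have "E b (coeff p i) = 0" for b i
    by (metis coeff_0 coeff_map_poly zero)
  then show ?thesis
    unfolding const_poly_dvd_iff by (blast intro: coeff_dvd)
qed

lemma hyperplane_dvd2:
  assumes "\<And>x1. poly (poly (b::complex poly poly) [:x1:]) d0 = 0"
  shows "[:[:-d0, 1:]:] dvd b"
  by (rule const_dvd_if_outer_vanishing[where E = "\<lambda>_::unit. \<lambda>c. poly c d0"])
     (use assms in \<open>auto simp: poly_eq_0_iff_dvd eval2_outer\<close>)

lemma hyperplane_dvd3:
  assumes "\<And>x1 x2. poly (poly (poly (a::complex poly poly poly) [:[:x2:]:]) [:x1:]) d0 = 0"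
  shows "[:[:[:-d0, 1:]:]:] dvd a"
  by (rule const_dvd_if_outer_vanishing[where E = "\<lambda>x1 b. poly (poly b [:x1:]) d0"])
     (use assms in \<open>auto intro: hyperplane_dvd2 simp: eval3_outer[symmetric]\<close>)

lemma hyperplane_dvd4:
  assumes "\<And>x1 x2 x3. eval4 g d0 x1 x2 x3 = 0"
  shows "const_in_x [:-d0, 1:] dvd g"
  unfolding const_in_x_def
  by (rule const_dvd_if_outer_vanishing
        [where E = "\<lambda>(x1, x2) a. poly (poly (poly a [:[:x2:]:]) [:x1:]) d0"])
     (use assms in \<open>auto intro: hyperplane_dvd3 simp: eval4_outer[symmetric]\<close>)

lemma isCont_eval2: "isCont D t \<Longrightarrow> isCont X1 t \<Longrightarrow>
  isCont (\<lambda>\<tau>. poly (poly (b::complex poly poly) [:X1 \<tau>:]) (D \<tau>)) t"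
  by (induction b) (auto intro!: continuous_intros)

lemma isCont_eval3: "isCont D t \<Longrightarrow> isCont X1 t \<Longrightarrow> isCont X2 t \<Longrightarrow>
  isCont (\<lambda>\<tau>. poly (poly (poly (a::complex poly poly poly) [:[:X2 \<tau>:]:]) [:X1 \<tau>:]) (D \<tau>)) t"
  by (induction a) (auto intro!: continuous_intros isCont_eval2)

lemma isCont_eval4: "isCont D t \<Longrightarrow> isCont X1 t \<Longrightarrow> isCont X2 t \<Longrightarrow> isCont X3 t \<Longrightarrow>
  isCont (\<lambda>\<tau>. eval4 g (D \<tau>) (X1 \<tau>) (X2 \<tau>) (X3 \<tau>)) t"
  unfolding eval4_def by (induction g) (auto intro!: continuous_intros isCont_eval3)

section \<open>The normal lines of the offset\<close>

lemma parallel_is_multiple: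
  fixes n1 n2 n3 v1 v2 v3 :: "'a::field"
  assumes h: "n1^2 + n2^2 + n3^2 \<noteq> 0"
    and c12: "n1 * v2 - n2 * v1 = 0" and c13: "n1 * v3 - n3 * v1 = 0"
    and c23: "n2 * v3 - n3 * v2 = 0"
  obtains t where "v1 = t * n1" "v2 = t * n2" "v3 = t * n3"
proof
  define h where "h = n1^2 + n2^2 + n3^2"
  define s where "s = n1 * v1 + n2 * v2 + n3 * v3"
  define t where "t = s / h"
  have "h \<noteq> 0" using assms by (simp add: h_def)
  have "v1 * h - n1 * s = n2 * (n2 * v1 - n1 * v2) + n3 * (n3 * v1 - n1 * v3)"
    by (simp add: h_def s_def power2_eq_square algebra_simps)
  also have "\<dots> = 0" using c12 c13 by (simp add: algebra_simps)
  finally show "v1 = t * n1" using \<open>h \<noteq> 0\<close> by (simp add: t_def field_simps)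
  have "v2 * h - n2 * s = n1 * (n1 * v2 - n2 * v1) + n3 * (n3 * v2 - n2 * v3)"
    by (simp add: h_def s_def power2_eq_square algebra_simps)
  also have "\<dots> = 0" using c12 c23 by (simp add: algebra_simps)
  finally show "v2 = t * n2" using \<open>h \<noteq> 0\<close> by (simp add: t_def field_simps)
  have "v3 * h - n3 * s = n1 * (n1 * v3 - n3 * v1) + n2 * (n2 * v3 - n3 * v2)"
    by (simp add: h_def s_def power2_eq_square algebra_simps)
  also have "\<dots> = 0" using c13 c23 by (simp add: algebra_simps)
  finally show "v3 = t * n3" using \<open>h \<noteq> 0\<close> by (simp add: t_def field_simps)
qed

lemma sqrt_with_sign:
  fixes d t h :: complex
  assumes "d^2 = t^2 * h"
  obtains c where "c^2 = h" "d = t * c"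
proof -
  have "(csqrt h)^2 = h" by simp
  then have "(d - t * csqrt h) * (d + t * csqrt h) = 0"
    using assms by (simp add: power2_eq_square algebra_simps)
  then have "d = t * csqrt h \<or> d = t * (- csqrt h)"
    by (auto simp: add_eq_0_iff)
  moreover have "(csqrt h)^2 = h" "(- csqrt h)^2 = h" by simp_all
  ultimately show thesis using that by blast
qed

lemma normal_line_in_offset:
  assumes on_surface: "eval3 f y1 y2 y3 = 0"
    and regular: "eval3 (h_imp f) y1 y2 y3 \<noteq> 0"
    and c: "c^2 = eval3 (h_imp f) y1 y2 y3"
  shows "(\<tau> * c, y1 + \<tau> * eval3 (pd1 f) y1 y2 y3, y2 + \<tau> * eval3 (pd2 f) y1 y2 y3,
           y3 + \<tau> * eval3 (pd3 f) y1 y2 y3) \<in> offset_incidence_proj f"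
proof -
  define u where "u = 1 / eval3 (h_imp f) y1 y2 y3"
  have "(\<tau> * eval3 (pd1 f) y1 y2 y3)^2 + (\<tau> * eval3 (pd2 f) y1 y2 y3)^2
        + (\<tau> * eval3 (pd3 f) y1 y2 y3)^2 - (\<tau> * c)^2 = 0"
    using c by (simp add: eval3_h_imp power2_eq_square algebra_simps)
  moreover have "u * eval3 (h_imp f) y1 y2 y3 - 1 = 0" using regular by (simp add: u_def)
  ultimately show ?thesis
    unfolding offset_incidence_proj_def using on_surface
    by (simp only: mem_Collect_eq case_prod_conv, intro exI[of _ y1] exI[of _ y2] exI[of _ y3] exI[of _ u])
       (simp add: Let_def algebra_simps)
qed

lemma offset_point_on_normal_line:
  assumes "(d, x1, x2, x3) \<in> offset_incidence_proj f"
  obtains y1 y2 y3 c t where "eval3 f y1 y2 y3 = 0" "eval3 (h_imp f) y1 y2 y3 \<noteq> 0"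
    "c^2 = eval3 (h_imp f) y1 y2 y3" "c \<noteq> 0" "d = t * c"
    "x1 = y1 + t * eval3 (pd1 f) y1 y2 y3" "x2 = y2 + t * eval3 (pd2 f) y1 y2 y3"
    "x3 = y3 + t * eval3 (pd3 f) y1 y2 y3"
proof -
  from assms obtain y1 y2 y3 u where
    on_surface: "eval3 f y1 y2 y3 = 0" and
    c12: "eval3 (pd1 f) y1 y2 y3 * (x2 - y2) - eval3 (pd2 f) y1 y2 y3 * (x1 - y1) = 0" and
    c13: "eval3 (pd1 f) y1 y2 y3 * (x3 - y3) - eval3 (pd3 f) y1 y2 y3 * (x1 - y1) = 0" and
    c23: "eval3 (pd2 f) y1 y2 y3 * (x3 - y3) - eval3 (pd3 f) y1 y2 y3 * (x2 - y2) = 0" and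
    dist: "(x1 - y1)^2 + (x2 - y2)^2 + (x3 - y3)^2 - d^2 = 0" and
    inv: "u * eval3 (h_imp f) y1 y2 y3 - 1 = 0"
    unfolding offset_incidence_proj_def by (auto simp: Let_def)
  have regular: "eval3 (h_imp f) y1 y2 y3 \<noteq> 0" using inv by auto
  then obtain t where
    v1: "x1 - y1 = t * eval3 (pd1 f) y1 y2 y3" and
    v2: "x2 - y2 = t * eval3 (pd2 f) y1 y2 y3" and
    v3: "x3 - y3 = t * eval3 (pd3 f) y1 y2 y3"
    using parallel_is_multiple[OF _ c12 c13 c23] by (auto simp: eval3_h_imp)
  have "d^2 = t^2 * eval3 (h_imp f) y1 y2 y3"
    using dist unfolding v1 v2 v3 eval3_h_imp by (simp add: power2_eq_square algebra_simps)
  then obtain c where "c^2 = eval3 (h_imp f) y1 y2 y3" "d = t * c"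
    by (rule sqrt_with_sign)
  moreover have "c \<noteq> 0" using calculation(1) regular by auto
  ultimately show thesis
    using that on_surface regular v1 v2 v3 by (simp add: algebra_simps)
qed

text \<open>Key step (1): a polynomial vanishing on the incidence projection away from the
  hyperplane \<open>d = d0\<close> vanishes on all of it, since each point is a limit of points
  of its normal line with \<open>d \<noteq> d0\<close>.\<close>
lemma vanishing_off_hyperplane:
  assumes mem: "(d, x1, x2, x3) \<in> offset_incidence_proj f"
    and off: "\<And>d' x1' x2' x3'. (d', x1', x2', x3') \<in> offset_incidence_proj f \<Longrightarrow> d' \<noteq> d0
          \<Longrightarrow> eval4 q d' x1' x2' x3' = 0"
  shows "eval4 q d x1 x2 x3 = 0"
proof (cases "d = d0")
  case False
  then show ?thesis using off mem by blast
next
  case True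
  obtain y1 y2 y3 c t where on_surface: "eval3 f y1 y2 y3 = 0"
    and regular: "eval3 (h_imp f) y1 y2 y3 \<noteq> 0" and c: "c^2 = eval3 (h_imp f) y1 y2 y3"
    and "c \<noteq> 0" "d = t * c"
    and x: "x1 = y1 + t * eval3 (pd1 f) y1 y2 y3" "x2 = y2 + t * eval3 (pd2 f) y1 y2 y3"
           "x3 = y3 + t * eval3 (pd3 f) y1 y2 y3"
    using offset_point_on_normal_line[OF mem] by metis
  define \<phi> where "\<phi> = (\<lambda>\<tau>. eval4 q (\<tau> * c) (y1 + \<tau> * eval3 (pd1 f) y1 y2 y3)
                     (y2 + \<tau> * eval3 (pd2 f) y1 y2 y3) (y3 + \<tau> * eval3 (pd3 f) y1 y2 y3))"
  have "\<phi> \<tau> = 0" if "\<tau> \<noteq> t" for \<tau>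
  proof -
    have "\<tau> * c \<noteq> d0" using that \<open>c \<noteq> 0\<close> \<open>d = t * c\<close> True by auto
    then show ?thesis
      unfolding \<phi>_def by (rule off[OF normal_line_in_offset[OF on_surface regular c]])
  qed
  then have "\<phi> \<midarrow>t\<rightarrow> 0"
    by (intro tendsto_eventually) (auto simp: eventually_at_filter intro!: always_eventually)
  moreover have "isCont \<phi> t"
    unfolding \<phi>_def by (intro isCont_eval4 continuous_intros)
  then have "\<phi> \<midarrow>t\<rightarrow> \<phi> t" by (simp add: isCont_def)
  ultimately have "\<phi> t = 0" using LIM_unique by blast
  then show ?thesis using x \<open>d = t * c\<close> by (simp add: \<phi>_def algebra_simps)
qed

section \<open>Linear factors of the offset polynomial are simple\<close>

lemma offset_linear_factor_dvd_cofactor: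
  assumes g_defines: "{(d, x1, x2, x3). eval4 g d x1 x2 x3 = 0} = generic_offset f"
    and g_factor: "g = const_in_x [:-d0, 1:] * q"
  shows "const_in_x [:-d0, 1:] dvd q"
proof (rule hyperplane_dvd4)
  let ?S = "offset_incidence_proj f"
  have g_eval: "eval4 g d x1 x2 x3 = (d - d0) * eval4 q d x1 x2 x3" for d x1 x2 x3
    by (simp add: g_factor eval4_mult eval4_linear_d)
  have "?S \<subseteq> generic_offset f"
    unfolding generic_offset_def zariski_closure4_def by fastforce
  then have "eval4 q d x1 x2 x3 = 0" if "(d, x1, x2, x3) \<in> ?S" "d \<noteq> d0" for d x1 x2 x3
    using that g_defines g_eval by fastforce
  then have q_on_S: "\<forall>(e, z1, z2, z3) \<in> ?S. eval4 q e z1 z2 z3 = 0"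
    by (blast intro: vanishing_off_hyperplane)
  fix x1 x2 x3
  have "(d0, x1, x2, x3) \<in> zariski_closure4 ?S"
    using g_defines g_eval[of d0] by (auto simp: generic_offset_def)
  then show "eval4 q d0 x1 x2 x3 = 0"
    using q_on_S unfolding zariski_closure4_def by blast
qed

theorem mainTheorem7:
  fixes f :: "complex poly poly poly" and g :: "complex poly poly poly poly"
  assumes f_irr: "irreducible f"
    and h_nonzero_on_surface: "\<exists>y1 y2 y3. eval3 f y1 y2 y3 = 0 \<and> eval3 (h_imp f) y1 y2 y3 \<noteq> 0"
    and g_nonzero: "g \<noteq> 0"
    and g_squarefree: "squarefree g"
    and g_defines: "{(d, x1, x2, x3). eval4 g d x1 x2 x3 = 0} = generic_offset f"
  shows "\<forall>p :: complex poly. const_in_x p dvd g \<longrightarrow> degree p = 0"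
proof (intro allI impI)
  fix p :: "complex poly"
  assume p_dvd: "const_in_x p dvd g"
  show "degree p = 0"
  proof (rule ccontr)
    assume "degree p \<noteq> 0"
    then obtain d0 where "poly p d0 = 0"
      using fundamental_theorem_of_algebra constant_degree by metis
    then obtain r where "p = [:-d0, 1:] * r" by (auto simp: poly_eq_0_iff_dvd)
    define L where "L = const_in_x [:-d0, 1:]"
    have "const_in_x p = L * const_in_x r"
      by (simp add: \<open>p = _\<close> L_def const_in_x_def)
    then obtain q where g_factor: "g = L * q" using p_dvd by (metis dvd_mult_left dvdE)
    then have "L dvd q" unfolding L_def by (rule offset_linear_factor_dvd_cofactor[OF g_defines])
    then have "L^2 dvd g" by (simp add: g_factor power2_eq_square)
    then have "is_unit L" using g_squarefree by (simp add: squarefree_def)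
    then show False by (simp add: L_def const_in_x_def is_unit_const_poly_iff is_unit_poly_iff)
  qed
qed

end
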